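(* In the setting described in the context (no inter-cell interference), suppose the target rate $R_{\tilde k}>0$ satisfies $$R_{\tilde k}<\log_2\left(1+\frac{\beta_{\tilde k}^2|\mu_{\tilde k}|^2}{\sum_{i=1}^K|\zeta_{\tilde i}|^2+\beta_k^2\beta_{\tilde k}^2|\mu_{\tilde k}|^2+\frac{\sigma_{\tilde k}^2}{P\ell(d_{\tilde k})}}\right).$$ Then the outage probability $p_{\tilde k}=\Pr\left(\log_2(1+\mathrm{SINR}_{\tilde k})<R_{\tilde k}\right)$ tends to $0$ as $\sigma_h^2\to0$ (equivalently, as the channel K factor $\mathcal K=\|\hat{\mathbf H}\|_F^2/(\sigma_h^2\mathrm{Tr}(\mathbf R_t)\mathrm{Tr}(\mathbf R_r))\to\infty$), with all other quantities held fixed.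
   Context: Let $K\le\min\{M,N\}$ be positive integers and $k\in\{1,\dots,K\}$. Fix an estimated channel $\hat{\mathbf H}\in\mathbb C^{N\times M}$, Hermitian positive definite correlation matrices $\mathbf R_r\in\mathbb C^{N\times N}$, $\mathbf R_t\in\mathbb C^{M\times M}$, and $\sigma_h^2>0$. The channel-estimation error is $\mathbf E=\mathbf R_r^{1/2}\mathbf E_w\mathbf R_t^{1/2}$ with $\mathrm{vec}(\mathbf E_w)\sim\mathcal{CN}(\mathbf 0,\sigma_h^2\mathbf I_{NM})$. Fix a precoder $\mathbf V=(\mathbf v_1,\dots,\mathbf v_K)\in\mathbb C^{M\times K}$ with $\|\mathbf v_i\|=1$, a nonzero receive filter $\mathbf u\in\mathbb C^N$ (of the far user $\tilde k$), power coefficients $\beta_k,\beta_{\tilde k}\ge0$ with $\beta_k^2+\beta_{\tilde k}^2=1$, transmit power $P>0$, distance $d_{\tilde k}>0$, path loss $\ell(d)=d^{-\alpha}$ with $\alpha>2$, noise variance $\sigma^2\ge0$, and $\sigma_{\tilde k}^2=\sigma^2\|\mathbf u\|^2$. The far user's SINR (with no inter-cell interference) is $$\mathrm{SINR}_{\tilde k}=\frac{P\ell(d_{\tilde k})|\mathbf u^{\mathrm H}\hat{\mathbf H}\mathbf v_k|^2\beta_{\tilde k}^2}{P\ell(d_{\tilde k})\left(|\mathbf u^{\mathrm H}\mathbf E\mathbf v_k|^2\beta_{\tilde k}^2+|\mathbf u^{\mathrm H}(\hat{\mathbf H}+\mathbf E)\mathbf v_k|^2\beta_k^2+\sum_{i\ne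 k}|\mathbf u^{\mathrm H}(\hat{\mathbf H}+\mathbf E)\mathbf v_i|^2\right)+\sigma_{\tilde k}^2}.$$ Define $\mu_{\tilde i}=\mathbf u^{\mathrm H}\hat{\mathbf H}\mathbf v_i$ ($i=1,\dots,K$), $\tilde{\boldsymbol\nu}=(\mu_{\tilde 1},\dots,\mu_{\widetilde{k-1}},\beta_k^2\mu_{\tilde k},\mu_{\widetilde{k+1}},\dots,\mu_{\tilde K})^{\mathrm T}$, $\tilde{\boldsymbol\Sigma}=\sigma_h^2(\mathbf u^{\mathrm H}\mathbf R_r\mathbf u)(\mathbf V^{\mathrm H}\mathbf R_t\mathbf V)^{\mathrm T}$ (the covariance of $(\mathbf u^{\mathrm H}\mathbf E\mathbf V)^{\mathrm T}$), with eigendecomposition $\tilde{\boldsymbol\Sigma}=\tilde{\boldsymbol\Psi}\tilde{\boldsymbol\Delta}\tilde{\boldsymbol\Psi}^{\mathrm H}$ ($\tilde{\boldsymbol\Psi}$ unitary), and let $\zeta_{\tilde i}$ be the $i$-th entry of $\tilde{\boldsymbol\Psi}^{\mathrm H}\tilde{\boldsymbol\nu}$. *)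

theory Defs
  imports "HOL-Analysis.Analysis"
begin

text \<open>Complex matrices are rendered as complex^c^r (rows indexed by 'r,
  columns by 'c); complex vectors as complex^n.\<close>

definition cadj :: "complex^'c^'r \<Rightarrow> complex^'r^'c" where
  "cadj A = (\<chi> i j. cnj (A $ j $ i))"

definition cinner :: "complex^'n \<Rightarrow> complex^'n \<Rightarrow> complex" where
  "cinner x y = (\<Sum>i\<in>UNIV. cnj (x $ i) * y $ i)"

definition cscale :: "complex \<Rightarrow> complex^'c^'r \<Rightarrow> complex^'c^'r" where
  "cscale c A = (\<chi> i j. c * A $ i $ j)"

definition hermitian :: "complex^'n^'n \<Rightarrow> bool" where
  "hermitian A \<longleftrightarrow> cadj A = A"

definition pos_def_herm :: "complex^'n^'n \<Rightarrow> bool" where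
  "pos_def_herm A \<longleftrightarrow> hermitian A \<and> (\<forall>x. x \<noteq> 0 \<longrightarrow> Re (cinner x (A *v x)) > 0)"

definition unitary_mat :: "complex^'n^'n \<Rightarrow> bool" where
  "unitary_mat U \<longleftrightarrow> cadj U ** U = mat 1 \<and> U ** cadj U = mat 1"

definition diagonal_mat :: "complex^'n^'n \<Rightarrow> bool" where
  "diagonal_mat D \<longleftrightarrow> (\<forall>i j. i \<noteq> j \<longrightarrow> D $ i $ j = 0)"

text \<open>Distribution of a random matrix whose vectorisation is CN(0, s I):
  i.i.d. circularly-symmetric complex Gaussian entries of variance s, i.e. density
  (pi s)^(-1) exp(-|w|^2/s) per entry w.r.t. Lebesgue measure.\<close>
definition cgauss_mat :: "real \<Rightarrow> (complex^'c^'r) measure" where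
  "cgauss_mat s = density lborel
     (\<lambda>W. ennreal (\<Prod>i\<in>UNIV. \<Prod>j\<in>UNIV. exp (- (cmod (W $ i $ j))\<^sup>2 / s) / (pi * s)))"

text \<open>SINR of the far user, given the channel estimation error E.\<close>
definition sinr_far ::
  "real \<Rightarrow> real \<Rightarrow> complex^'m^'n \<Rightarrow> complex^'m^'n \<Rightarrow> complex^'k^'m \<Rightarrow> complex^'n
    \<Rightarrow> real \<Rightarrow> real \<Rightarrow> 'k \<Rightarrow> real \<Rightarrow> real" where
  "sinr_far P l Hh E V u bk bkt k sig2 =
     (P * l * (cmod (cinner u (Hh *v column k V)))\<^sup>2 * bkt\<^sup>2) /
     (P * l * ((cmod (cinner u (E *v column k V)))\<^sup>2 * bkt\<^sup>2
             + (cmod (cinner u ((Hh + E) *v column k V)))\<^sup>2 * bk\<^sup>2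
             + (\<Sum>i\<in>UNIV - {k}. (cmod (cinner u ((Hh + E) *v column i V)))\<^sup>2))
      + sig2 * (norm u)\<^sup>2)"

end

theory Submission
  imports Defs "HOL-Probability.Probability" "HOL-Real_Asymp.Real_Asymp"
begin

(* The estimation error is E = Rrh W Rth with W distributed as cgauss_mat s, and the far user's
   SINR is continuous in E wherever it is nonzero. By unitarity of Psi the sum of the |zeta_i|^2
   equals |nu|^2, so the bound assumed on R is exactly log2 (1 + SINR) at E = 0; as R > 0, that
   SINR is positive. Hence the outage event {log2 (1 + SINR) < R} stays outside a ball |W| < delta,
   and the Gaussian tail bound P(|W| >= delta) <= 2^(N M) exp (-delta^2 / (2 s)) sends its
   probability to 0 as s = sigma_h^2 -> 0. *)

lemma norm_vec_vec_power2:
  fixes W :: "'a::real_normed_vector^'c^'r"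
  shows "(norm W)\<^sup>2 = (\<Sum>i\<in>UNIV. \<Sum>j\<in>UNIV. (norm (W $ i $ j))\<^sup>2)"
  by (simp add: norm_vec_def L2_set_def sum_nonneg)

lemma nn_integral_exp_square:
  assumes "c > 0"
  shows "(\<integral>\<^sup>+x. ennreal (exp (- x\<^sup>2 / c)) \<partial>lborel) = ennreal (sqrt (pi * c))"
proof -
  have "exp (- x\<^sup>2 / c) = sqrt (pi * c) * normal_density 0 (sqrt (c / 2)) x" for x
    using assms by (simp add: normal_density_def real_sqrt_mult)
  then have "(\<integral>\<^sup>+x. ennreal (exp (- x\<^sup>2 / c)) \<partial>lborel)
      = ennreal (sqrt (pi * c)) * (\<integral>\<^sup>+x. ennreal (normal_density 0 (sqrt (c / 2)) x) \<partial>lborel)"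
    using assms by (simp add: ennreal_mult nn_integral_cmult)
  also have "(\<integral>\<^sup>+x. ennreal (normal_density 0 (sqrt (c / 2)) x) \<partial>lborel) = 1"
    using assms by (subst nn_integral_eq_integral) auto
  finally show ?thesis by simp
qed

lemma nn_integral_exp_norm_power2:
  fixes c :: real
  assumes "c > 0"
  shows "(\<integral>\<^sup>+x. ennreal (exp (- (norm (x::'a::euclidean_space))\<^sup>2 / c)) \<partial>lborel)
    = ennreal (sqrt (pi * c) ^ DIM('a))"
proof -
  have exp_split: "exp (- (norm x)\<^sup>2 / c) = (\<Prod>b\<in>Basis. exp (- (x \<bullet> b)\<^sup>2 / c))" for x :: 'a
  proof -
    have "(norm x)\<^sup>2 = (\<Sum>b\<in>Basis. (x \<bullet> b)\<^sup>2)"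
      unfolding power2_norm_eq_inner by (subst euclidean_inner) (simp add: power2_eq_square)
    then show ?thesis
      by (simp add: exp_sum sum_divide_distrib flip: sum_negf)
  qed
  have "(\<integral>\<^sup>+x. ennreal (exp (- (norm (x::'a))\<^sup>2 / c)) \<partial>lborel)
      = (\<integral>\<^sup>+x. (\<Prod>b\<in>Basis. ennreal (exp (- (x \<bullet> b)\<^sup>2 / c))) \<partial>(lborel :: 'a measure))"
    by (rule nn_integral_cong, subst exp_split) (simp add: prod_ennreal)
  also have "\<dots> = (\<Prod>b\<in>(Basis::'a set). \<integral>\<^sup>+t. ennreal (exp (- t\<^sup>2 / c)) \<partial>lborel)"
    by (rule nn_integral_lborel_prod) auto
  also have "\<dots> = ennreal (sqrt (pi * c)) ^ DIM('a)"
    by (simp only: nn_integral_exp_square[OF assms] prod_constant)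
  finally show ?thesis
    using assms by (simp add: ennreal_power)
qed

lemma nn_integral_exp_norm_power2_tail_le:
  fixes \<delta> s :: real
  assumes "s > 0" "\<delta> \<ge> 0"
  shows "(\<integral>\<^sup>+x. ennreal (exp (- (norm (x::'a::euclidean_space))\<^sup>2 / s))
      * indicator {x. \<delta> \<le> norm x} x \<partial>lborel)
    \<le> ennreal (exp (- \<delta>\<^sup>2 / (2 * s)) * sqrt (2 * pi * s) ^ DIM('a))"
proof -
  have pointwise: "ennreal (exp (- (norm x)\<^sup>2 / s)) * indicator {x. \<delta> \<le> norm x} x
      \<le> ennreal (exp (- \<delta>\<^sup>2 / (2 * s))) * ennreal (exp (- (norm x)\<^sup>2 / (2 * s)))" for x :: 'a
  proof (cases "\<delta> \<le> norm x")
    case True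
    then have "\<delta>\<^sup>2 \<le> (norm x)\<^sup>2"
      using assms by (simp add: power_mono)
    then have "exp (- (norm x)\<^sup>2 / s) \<le> exp (- \<delta>\<^sup>2 / (2 * s)) * exp (- (norm x)\<^sup>2 / (2 * s))"
      using assms by (simp add: field_simps flip: exp_add)
    then show ?thesis
      using True by (simp add: ennreal_leI flip: ennreal_mult)
  qed simp
  have "(\<integral>\<^sup>+x. ennreal (exp (- (norm (x::'a))\<^sup>2 / s)) * indicator {x. \<delta> \<le> norm x} x \<partial>lborel)
      \<le> (\<integral>\<^sup>+x. ennreal (exp (- \<delta>\<^sup>2 / (2 * s)))
          * ennreal (exp (- (norm (x::'a))\<^sup>2 / (2 * s))) \<partial>lborel)"
    by (rule nn_integral_mono) (rule pointwise)
  also have "\<dots> = ennreal (exp (- \<delta>\<^sup>2 / (2 * s))) * ennreal (sqrt (pi * (2 * s)) ^ DIM('a))"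
    using assms nn_integral_exp_norm_power2[of "2 * s", where 'a='a] by (simp add: nn_integral_cmult)
  also have "\<dots> = ennreal (exp (- \<delta>\<^sup>2 / (2 * s)) * sqrt (2 * pi * s) ^ DIM('a))"
    using assms by (simp add: ennreal_mult mult_ac)
  finally show ?thesis .
qed

lemma cgauss_mat_eq_density:
  "cgauss_mat s = density lborel
     (\<lambda>W::complex^'c^'r. ennreal (exp (- (norm W)\<^sup>2 / s) / (pi * s) ^ (CARD('r) * CARD('c))))"
  by (simp add: cgauss_mat_def norm_vec_vec_power2 prod_dividef exp_sum sum_divide_distrib
      power_mult mult.commute[of "CARD('r)"] flip: sum_negf)

lemma emeasure_cgauss_mat_tail_le:
  fixes \<delta> s :: real
  assumes "s > 0" "\<delta> \<ge> 0"
  shows "emeasure (cgauss_mat s) {W::complex^'c^'r. \<delta> \<le> norm W}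
    \<le> ennreal (2 ^ (CARD('r) * CARD('c)) * exp (- \<delta>\<^sup>2 / (2 * s)))"
proof -
  define n where "n = CARD('r) * CARD('c)"
  define T where "T = {W::complex^'c^'r. \<delta> \<le> norm W}"
  have dim: "DIM(complex^'c^'r) = 2 * n"
    by (simp add: n_def)
  have density_split:
    "ennreal (exp t / (pi * s) ^ n) = ennreal (1 / (pi * s) ^ n) * ennreal (exp t)" for t
    using assms by (simp flip: ennreal_mult')
  have "emeasure (cgauss_mat s) T
      = (\<integral>\<^sup>+W. ennreal (exp (- (norm W)\<^sup>2 / s) / (pi * s) ^ n) * indicator T W \<partial>lborel)"
    unfolding cgauss_mat_eq_density n_def T_def by (rule emeasure_density) auto
  also have "\<dots> = ennreal (1 / (pi * s) ^ n)
      * (\<integral>\<^sup>+W. ennreal (exp (- (norm W)\<^sup>2 / s)) * indicator T W \<partial>lborel)"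
    unfolding density_split mult.assoc by (rule nn_integral_cmult) (simp add: T_def)
  also have "\<dots> \<le> ennreal (1 / (pi * s) ^ n)
      * ennreal (exp (- \<delta>\<^sup>2 / (2 * s)) * sqrt (2 * pi * s) ^ (2 * n))"
    using nn_integral_exp_norm_power2_tail_le[OF assms, where 'a="complex^'c^'r", unfolded dim]
    unfolding T_def by (rule mult_left_mono) simp
  also have "\<dots> = ennreal (2 ^ n * exp (- \<delta>\<^sup>2 / (2 * s)))"
  proof -
    have "sqrt (2 * pi * s) ^ (2 * n) = 2 ^ n * (pi * s) ^ n"
      using assms by (simp add: power_mult power_mult_distrib)
    then show ?thesis
      using assms by (simp flip: ennreal_mult')
  qed
  finally show ?thesis
    unfolding T_def n_def .
qed

lemma tendsto_measure_cgauss_mat_sublevel: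
  fixes g :: "complex^'c^'r \<Rightarrow> real"
  assumes "isCont g 0" "R < g 0"
  shows "((\<lambda>s. measure (cgauss_mat s) {W. g W < R}) \<longlongrightarrow> 0) (at_right 0)"
proof -
  define n where "n = CARD('r) * CARD('c)"
  obtain \<delta> where "\<delta> > 0" and \<delta>: "\<And>W. dist W 0 < \<delta> \<Longrightarrow> dist (g W) (g 0) < g 0 - R"
    using assms unfolding continuous_at_eps_delta by (metis diff_gt_0_iff_gt)
  have "\<delta> \<le> norm W" if "g W < R" for W
  proof (rule ccontr)
    assume "\<not> \<delta> \<le> norm W"
    then have "\<bar>g W - g 0\<bar> < g 0 - R"
      using \<delta>[of W] by (simp add: dist_real_def)
    with that show False by linarith
  qed
  then have sublevel_outside_ball: "{W. g W < R} \<subseteq> {W::complex^'c^'r. \<delta> \<le> norm W}"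
    by blast
  have bound: "measure (cgauss_mat s) {W. g W < R} \<le> 2 ^ n * exp (- \<delta>\<^sup>2 / (2 * s))"
    if "s > 0" for s
  proof -
    have "emeasure (cgauss_mat s) {W. g W < R}
        \<le> emeasure (cgauss_mat s) {W::complex^'c^'r. \<delta> \<le> norm W}"
      using sublevel_outside_ball by (rule emeasure_mono) (simp add: cgauss_mat_def)
    also have "\<dots> \<le> ennreal (2 ^ n * exp (- \<delta>\<^sup>2 / (2 * s)))"
      unfolding n_def using \<open>\<delta> > 0\<close> that by (intro emeasure_cgauss_mat_tail_le) auto
    finally show ?thesis
      unfolding measure_def by (intro enn2real_leI) auto
  qed
  have eventually_bound:
    "\<forall>\<^sub>F s in at_right 0. measure (cgauss_mat s) {W. g W < R} \<le> 2 ^ n * exp (- \<delta>\<^sup>2 / (2 * s))"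
    using eventually_at_right_less[of 0] by eventually_elim (rule bound)
  have bound_tendsto_0: "((\<lambda>s. 2 ^ n * exp (- \<delta>\<^sup>2 / (2 * s))) \<longlongrightarrow> 0) (at_right 0)"
    using \<open>\<delta> > 0\<close> by real_asymp
  show ?thesis
    by (rule tendsto_sandwich[OF always_eventually eventually_bound tendsto_const bound_tendsto_0]) simp
qed

lemma cadj_cadj [simp]: "cadj (cadj A) = A"
  by (simp add: cadj_def vec_eq_iff)

lemma cinner_zero_right [simp]: "cinner x 0 = 0"
  by (simp add: cinner_def)

lemma cinner_self_eq_sum: "cinner x x = of_real (\<Sum>i\<in>UNIV. (cmod (x $ i))\<^sup>2)"
  unfolding cinner_def of_real_sum complex_norm_square by (simp add: mult.commute)

lemma cinner_matrix_vector_mult: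
  "cinner (A *v x) (A *v y) = cinner x ((cadj A ** A) *v y)"
proof -
  define f where "f i j l = cnj (x $ j) * (cnj (A $ i $ j) * A $ i $ l) * y $ l" for i j l
  have "cinner (A *v x) (A *v y) = (\<Sum>i\<in>UNIV. \<Sum>j\<in>UNIV. \<Sum>l\<in>UNIV. f i j l)"
    by (simp add: f_def cinner_def matrix_vector_mult_def sum_distrib_left sum_distrib_right mult_ac)
  also have "\<dots> = (\<Sum>j\<in>UNIV. \<Sum>i\<in>UNIV. \<Sum>l\<in>UNIV. f i j l)"
    by (rule sum.swap)
  also have "\<dots> = (\<Sum>j\<in>UNIV. \<Sum>l\<in>UNIV. \<Sum>i\<in>UNIV. f i j l)"
    by (rule sum.cong[OF refl], rule sum.swap)
  also have "\<dots> = cinner x ((cadj A ** A) *v y)"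
    by (simp add: f_def cinner_def matrix_vector_mult_def matrix_matrix_mult_def cadj_def
        sum_distrib_left sum_distrib_right mult_ac)
  finally show ?thesis .
qed

lemma unitary_mat_sum_cmod_power2:
  assumes "unitary_mat U"
  shows "(\<Sum>i\<in>UNIV. (cmod ((cadj U *v x) $ i))\<^sup>2) = (\<Sum>i\<in>UNIV. (cmod (x $ i))\<^sup>2)"
proof -
  have "cinner (cadj U *v x) (cadj U *v x) = cinner x x"
    using assms by (simp add: cinner_matrix_vector_mult unitary_mat_def)
  then show ?thesis
    by (simp only: cinner_self_eq_sum of_real_eq_iff)
qed

lemma tendsto_matrix_matrix_mult:
  fixes f :: "'a \<Rightarrow> 'b::real_normed_algebra_1^'n^'m" and g :: "'a \<Rightarrow> 'b^'p^'n"
  shows "(f \<longlongrightarrow> A) F \<Longrightarrow> (g \<longlongrightarrow> B) F \<Longrightarrow> ((\<lambda>y. f y ** g y) \<longlongrightarrow> A ** B) F"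
  unfolding matrix_matrix_mult_def by (intro tendsto_vec_lambda tendsto_intros)

lemma isCont_matrix_sandwich:
  fixes A :: "'a::real_normed_algebra_1^'n^'m"
  shows "isCont (\<lambda>W. A ** W ** B) W0"
  unfolding isCont_def by (intro tendsto_matrix_matrix_mult tendsto_const tendsto_ident_at)

lemma tendsto_cinner_matrix_vector_mult [tendsto_intros]:
  "(f \<longlongrightarrow> A) F \<Longrightarrow> ((\<lambda>y. cinner u (f y *v c)) \<longlongrightarrow> cinner u (A *v c)) F"
  unfolding cinner_def matrix_vector_mult_def by (intro tendsto_vec_lambda tendsto_intros)

lemma sinr_far_nonneg:
  "P \<ge> 0 \<Longrightarrow> l \<ge> 0 \<Longrightarrow> sig2 \<ge> 0 \<Longrightarrow> 0 \<le> sinr_far P l Hh E V u bk bkt k sig2"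
  by (simp add: sinr_far_def sum_nonneg)

lemma isCont_sinr_far:
  assumes "sinr_far P l Hh E0 V u bk bkt k sig2 \<noteq> 0"
  shows "isCont (\<lambda>E. sinr_far P l Hh E V u bk bkt k sig2) E0"
proof -
  from assms have denominator_nonzero: "P * l * ((cmod (cinner u (E0 *v column k V)))\<^sup>2 * bkt\<^sup>2
      + (cmod (cinner u ((Hh + E0) *v column k V)))\<^sup>2 * bk\<^sup>2
      + (\<Sum>i\<in>UNIV - {k}. (cmod (cinner u ((Hh + E0) *v column i V)))\<^sup>2)) + sig2 * (norm u)\<^sup>2 \<noteq> 0"
    by (auto simp: sinr_far_def)
  show ?thesis
    unfolding isCont_def sinr_far_def
    by (intro tendsto_divide tendsto_add tendsto_mult tendsto_power tendsto_norm tendsto_sum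
        tendsto_cinner_matrix_vector_mult tendsto_const tendsto_ident_at denominator_nonzero)
qed

lemma log_sinr_far_zero_error_eq:
  assumes "unitary_mat Psi" and "bk\<^sup>2 + bkt\<^sup>2 = 1" and "P * l > 0"
  shows "(let mu = (\<lambda>i. cinner u (Hh *v column i V));
              nu = (\<chi> i. if i = k then complex_of_real (bk\<^sup>2) * mu i else mu i);
              zeta = cadj Psi *v nu
          in log 2 (1 + bkt\<^sup>2 * (cmod (mu k))\<^sup>2 /
               ((\<Sum>i\<in>UNIV. (cmod (zeta $ i))\<^sup>2) + bk\<^sup>2 * bkt\<^sup>2 * (cmod (mu k))\<^sup>2
                + sigma2 * (norm u)\<^sup>2 / (P * l))))
    = log 2 (1 + sinr_far P l Hh 0 V u bk bkt k sigma2)"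
proof -
  define mu where "mu = (\<lambda>i. cinner u (Hh *v column i V))"
  define nu where "nu = (\<chi> i. if i = k then complex_of_real (bk\<^sup>2) * mu i else mu i)"
  define m where "m = (cmod (mu k))\<^sup>2"
  define S where "S = (\<Sum>i\<in>UNIV - {k}. (cmod (mu i))\<^sup>2)"
  have "(\<Sum>i\<in>UNIV. (cmod ((cadj Psi *v nu) $ i))\<^sup>2) = (\<Sum>i\<in>UNIV. (cmod (nu $ i))\<^sup>2)"
    using assms(1) by (rule unitary_mat_sum_cmod_power2)
  also have "\<dots> = (cmod (nu $ k))\<^sup>2 + (\<Sum>i\<in>UNIV - {k}. (cmod (nu $ i))\<^sup>2)"
    by (simp add: sum.remove)
  also have "\<dots> = bk\<^sup>2 * bk\<^sup>2 * m + S"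
    by (simp add: nu_def m_def S_def norm_mult norm_power power_mult_distrib)
  finally have "(\<Sum>i\<in>UNIV. (cmod ((cadj Psi *v nu) $ i))\<^sup>2) + bk\<^sup>2 * bkt\<^sup>2 * m
      = S + bk\<^sup>2 * m * (bk\<^sup>2 + bkt\<^sup>2)"
    by (simp add: algebra_simps)
  then have zeta:
    "(\<Sum>i\<in>UNIV. (cmod ((cadj Psi *v nu) $ i))\<^sup>2) + bk\<^sup>2 * bkt\<^sup>2 * m = S + bk\<^sup>2 * m"
    using assms(2) by simp
  have sinr_0: "sinr_far P l Hh 0 V u bk bkt k sigma2
      = P * l * m * bkt\<^sup>2 / (P * l * (m * bk\<^sup>2 + S) + sigma2 * (norm u)\<^sup>2)"
    by (simp add: sinr_far_def m_def S_def mu_def)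
  have "S + bk\<^sup>2 * m + sigma2 * (norm u)\<^sup>2 / (P * l)
      = (P * l * (m * bk\<^sup>2 + S) + sigma2 * (norm u)\<^sup>2) / (P * l)"
  proof -
    from assms(3) have "P \<noteq> 0" "l \<noteq> 0"
      by auto
    then show ?thesis
      by (simp add: field_simps)
  qed
  then have "bkt\<^sup>2 * m / ((\<Sum>i\<in>UNIV. (cmod ((cadj Psi *v nu) $ i))\<^sup>2) + bk\<^sup>2 * bkt\<^sup>2 * m
      + sigma2 * (norm u)\<^sup>2 / (P * l)) = sinr_far P l Hh 0 V u bk bkt k sigma2"
    unfolding zeta sinr_0 by (simp add: mult_ac)
  then show ?thesis
    unfolding Let_def m_def mu_def nu_def by simp
qed

theorem theorem5:
  fixes Hh :: "complex^'m^'n" and Rr Rrh :: "complex^'n^'n" and Rt Rth :: "complex^'m^'m"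
    and V :: "complex^'k^'m" and u :: "complex^'n" and k :: 'k
    and Psi :: "complex^'k^'k"
    and bk bkt P d alpha sigma2 R :: real
  assumes "CARD('k) \<le> CARD('m)" and "CARD('k) \<le> CARD('n)"
    and "pos_def_herm Rr" and "pos_def_herm Rt"
    and "pos_def_herm Rrh" and "Rrh ** Rrh = Rr"
    and "pos_def_herm Rth" and "Rth ** Rth = Rt"
    and "\<forall>i. norm (column i V) = 1"
    and "u \<noteq> 0"
    and "bk \<ge> 0" and "bkt \<ge> 0" and "bk\<^sup>2 + bkt\<^sup>2 = 1"
    and "P > 0" and "d > 0" and "alpha > 2" and "sigma2 \<ge> 0"
    and "unitary_mat Psi"
    and "\<forall>s>0. diagonal_mat (cadj Psi **
            cscale (complex_of_real s * cinner u (Rr *v u)) (transpose (cadj V ** Rt ** V)) ** Psi)"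
    and "R > 0"
    and "R < (let mu = (\<lambda>i. cinner u (Hh *v column i V));
                  nu = (\<chi> i. if i = k then complex_of_real (bk\<^sup>2) * mu i else mu i);
                  zeta = cadj Psi *v nu
              in log 2 (1 + bkt\<^sup>2 * (cmod (mu k))\<^sup>2 /
                   ((\<Sum>i\<in>UNIV. (cmod (zeta $ i))\<^sup>2) + bk\<^sup>2 * bkt\<^sup>2 * (cmod (mu k))\<^sup>2
                    + sigma2 * (norm u)\<^sup>2 / (P * d powr (- alpha)))))"
  shows "((\<lambda>s. measure (cgauss_mat s)
             {W. log 2 (1 + sinr_far P (d powr (- alpha)) Hh (Rrh ** W ** Rth) V u bk bkt k sigma2) < R})
          \<longlongrightarrow> 0) (at_right 0)"
proof -
  let ?l = "d powr - alpha"
  let ?sinr = "\<lambda>W. sinr_far P ?l Hh (Rrh ** W ** Rth) V u bk bkt k sigma2"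
  have zero: "Rrh ** 0 ** Rth = 0"
    by (simp add: matrix_matrix_mult_def vec_eq_iff)
  have "P * ?l > 0"
    using assms(14,15) by simp
  have R_below: "R < log 2 (1 + ?sinr 0)"
    using assms(21) unfolding log_sinr_far_zero_error_eq[OF assms(18,13) \<open>P * ?l > 0\<close>] zero .
  have "?sinr 0 > 0"
  proof -
    have "0 \<le> ?sinr 0"
      using \<open>P * ?l > 0\<close> assms(14,17) by (intro sinr_far_nonneg) auto
    moreover have "?sinr 0 \<noteq> 0"
      using R_below assms(20) by auto
    ultimately show ?thesis by simp
  qed
  then have "isCont ?sinr 0"
    by (intro isCont_o2[OF isCont_matrix_sandwich] isCont_sinr_far) simp
  then have "isCont (\<lambda>W. log 2 (1 + ?sinr W)) 0"
    unfolding isCont_def using \<open>?sinr 0 > 0\<close>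
    by (intro tendsto_log[OF tendsto_const tendsto_add[OF tendsto_const]]) auto
  then show ?thesis
    using R_below by (rule tendsto_measure_cgauss_mat_sublevel)
qed

end
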